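(* Let $H\supseteq\mathbb R$ be a Hardy field with $\partial(H)=H$ (every element of $H$ is the derivative of an element of $H$), and let $K=H[i]\subseteq\mathcal C^{<\infty}[i]$. The following are equivalent: (i) $\operatorname{I}(K)\subseteq K^\dagger$; (ii) $e^f\in K$ for all $f\in K$ with $f\prec1$; (iii) $e^\phi,\cos\phi,\sin\phi\in H$ for all $\phi\in H$ with $\phi\prec1$.
   Context: $\mathcal C^{<\infty}$ is the ring of germs at $+\infty$ of real functions that are $n$-times continuously differentiable for every $n$ (on some interval $(a,+\infty)$, $a$ depending on $n$... i.e. $\bigcap_n\mathcal C^n$), and $\mathcal C^{<\infty}[i]=\mathcal C^{<\infty}+\mathcal C^{<\infty}i$ its complexification, with derivation $(g+hi)'=g'+h'i$. A Hardy field is a subfield of $\mathcal C^{<\infty}$ closed under derivation. For complex germs, $f\preceq g$ iff $|f|\le c|g|$ eventually for some $c>0$; $f\prec g$ iff $g(t)\ne0$ eventually and $f(t)/g(t)\to0$. $\mathcal O_K=\{f\in K:f\preceq1\}$; $\operatorname{I}(K)$ is the $\mathcal O_K$-submodule of $K$ generated by $\{f':f\in\mathcal O_K\}$; $K^\dagger=\{f'/f:f\in K^\times\}$. *)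

theory Defs
  imports "HOL-Analysis.Analysis"
begin

text \<open>Germs at +\<infinity> are represented by functions on the reals; two functions represent
the same germ iff they agree eventually (filter at_top).  A set of germs is represented
by a set of representatives; membership of a germ is membership up to germ equality.\<close>

definition germ_eq :: "(real \<Rightarrow> 'a) \<Rightarrow> (real \<Rightarrow> 'a) \<Rightarrow> bool" where
  "germ_eq f g \<longleftrightarrow> (\<forall>\<^sub>F t in at_top. f t = g t)"

definition in_germs :: "(real \<Rightarrow> 'a) set \<Rightarrow> (real \<Rightarrow> 'a) \<Rightarrow> bool" where
  "in_germs A f \<longleftrightarrow> (\<exists>g\<in>A. germ_eq f g)"

definition Cn_on :: "nat \<Rightarrow> real set \<Rightarrow> (real \<Rightarrow> real) \<Rightarrow> bool" where
  "Cn_on n S f \<longleftrightarrow>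
     (\<forall>k<n. \<forall>x\<in>S. ((deriv ^^ k) f) differentiable (at x)) \<and> continuous_on S ((deriv ^^ n) f)"

definition C_inf :: "(real \<Rightarrow> real) \<Rightarrow> bool" where
  "C_inf f \<longleftrightarrow> (\<forall>n. \<exists>a. Cn_on n {a<..} f)"

definition hardy_field :: "(real \<Rightarrow> real) set \<Rightarrow> bool" where
  "hardy_field H \<longleftrightarrow>
     (\<forall>f\<in>H. C_inf f) \<and>
     in_germs H (\<lambda>_. 0) \<and> in_germs H (\<lambda>_. 1) \<and>
     (\<forall>f\<in>H. \<forall>g\<in>H. in_germs H (\<lambda>t. f t + g t)) \<and>
     (\<forall>f\<in>H. in_germs H (\<lambda>t. - f t)) \<and>
     (\<forall>f\<in>H. \<forall>g\<in>H. in_germs H (\<lambda>t. f t * g t)) \<and>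
     (\<forall>f\<in>H. \<not> germ_eq f (\<lambda>_. 0) \<longrightarrow> (\<exists>g\<in>H. germ_eq (\<lambda>t. f t * g t) (\<lambda>_. 1))) \<and>
     (\<forall>f\<in>H. in_germs H (deriv f))"

definition contains_reals :: "(real \<Rightarrow> real) set \<Rightarrow> bool" where
  "contains_reals H \<longleftrightarrow> (\<forall>c::real. in_germs H (\<lambda>_. c))"

definition cderiv :: "(real \<Rightarrow> complex) \<Rightarrow> real \<Rightarrow> complex" where
  "cderiv f t = complex_of_real (deriv (\<lambda>s. Re (f s)) t) + \<i> * complex_of_real (deriv (\<lambda>s. Im (f s)) t)"

definition cplx_ext :: "(real \<Rightarrow> real) set \<Rightarrow> (real \<Rightarrow> complex) set" where
  "cplx_ext H = {(\<lambda>t. complex_of_real (g t) + \<i> * complex_of_real (h t)) | g h. g \<in> H \<and> h \<in> H}"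

definition preceq :: "(real \<Rightarrow> 'a::real_normed_field) \<Rightarrow> (real \<Rightarrow> 'a) \<Rightarrow> bool" where
  "preceq f g \<longleftrightarrow> (\<exists>c>0. \<forall>\<^sub>F t in at_top. norm (f t) \<le> c * norm (g t))"

definition prec :: "(real \<Rightarrow> 'a::real_normed_field) \<Rightarrow> (real \<Rightarrow> 'a) \<Rightarrow> bool" where
  "prec f g \<longleftrightarrow> (\<forall>\<^sub>F t in at_top. g t \<noteq> 0) \<and> ((\<lambda>t. f t / g t) \<longlongrightarrow> 0) at_top"

definition valring :: "(real \<Rightarrow> complex) set \<Rightarrow> (real \<Rightarrow> complex) set" where
  "valring K = {f. in_germs K f \<and> preceq f (\<lambda>_. 1)}"

text \<open>I(K): the O_K-submodule of K generated by {f' : f \<in> O_K}, i.e. finite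
O_K-linear combinations of such derivatives (up to germ equality).\<close>
definition Ideriv :: "(real \<Rightarrow> complex) set \<Rightarrow> (real \<Rightarrow> complex) set" where
  "Ideriv K = {g. \<exists>n::nat. \<exists>a f. (\<forall>j<n. a j \<in> valring K \<and> f j \<in> valring K) \<and>
                   germ_eq g (\<lambda>t. \<Sum>j<n. a j t * cderiv (f j) t)}"

definition logder :: "(real \<Rightarrow> complex) set \<Rightarrow> (real \<Rightarrow> complex) set" where
  "logder K = {g. \<exists>f\<in>K. \<not> germ_eq f (\<lambda>_. 0) \<and> germ_eq g (\<lambda>t. cderiv f t / f t)}"

end

theory Submission
  imports Defs
begin

text \<open>Writing \<open>f = g + h i\<close> with \<open>g, h \<in> H\<close>, we have \<open>e\<^sup>f = e\<^sup>g (cos h + i sin h)\<close>, which gives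
  (ii) \<open>\<Leftrightarrow>\<close> (iii). For (i) \<open>\<Rightarrow>\<close> (ii): if \<open>f \<prec> 1\<close> then \<open>f' \<in> I(K)\<close>, so \<open>f' = y'/y\<close> for some
  \<open>y \<in> K\<close>, and \<open>y e\<^sup>-\<^sup>f\<close> is a nonzero constant \<open>c\<close>; thus \<open>e\<^sup>f = y/c \<in> K\<close>.
  For (ii) \<open>\<Rightarrow>\<close> (i) one shows that every element of \<open>I(K)\<close> is \<open>\<epsilon>'\<close> for some \<open>\<epsilon> \<in> K\<close>,
  \<open>\<epsilon> \<prec> 1\<close>; then it equals \<open>(e\<^sup>\<epsilon>)'/e\<^sup>\<epsilon>\<close>. Taking real and imaginary parts this reduces to
  products \<open>a b'\<close> with \<open>a, b \<in> H\<close> bounded: since \<open>\<partial>H = H\<close>, \<open>a b' = z'\<close> for some \<open>z \<in> H\<close>;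
  as \<open>z'\<close> and \<open>b'\<close> have eventually constant sign and \<open>|z'| \<le> C|b'|\<close>, the function \<open>z\<close> is
  eventually monotone with total variation bounded by that of \<open>C b\<close>, hence converges, and
  subtracting the limit gives the required \<open>\<epsilon>\<close>.\<close>

lemma germ_eq_refl [simp]: "germ_eq f f"
  by (simp add: germ_eq_def)

lemma germ_eq_sym: "germ_eq f g \<Longrightarrow> germ_eq g f"
  by (simp add: germ_eq_def eq_commute)

lemma germ_eq_trans: "germ_eq f g \<Longrightarrow> germ_eq g h \<Longrightarrow> germ_eq f h"
  unfolding germ_eq_def by (auto elim: eventually_elim2)

lemma in_germs_cong: "in_germs A f \<Longrightarrow> germ_eq g f \<Longrightarrow> in_germs A g"
  unfolding in_germs_def by (meson germ_eq_trans)

lemma in_germsI: "f \<in> A \<Longrightarrow> in_germs A f"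
  unfolding in_germs_def using germ_eq_refl by blast

lemma in_germsE:
  assumes "in_germs A f"
  obtains g where "g \<in> A" "germ_eq f g"
  using assms unfolding in_germs_def by blast

lemma germ_eq_comp2:
  "germ_eq f f' \<Longrightarrow> germ_eq g g' \<Longrightarrow> germ_eq (\<lambda>t. F (f t) (g t)) (\<lambda>t. F (f' t) (g' t))"
  unfolding germ_eq_def by (auto elim: eventually_elim2)

lemma germ_eq_eventually_nhds:
  assumes "germ_eq f g"
  shows "\<forall>\<^sub>F t in at_top. \<forall>\<^sub>F s in nhds t. f s = g s"
proof -
  obtain N where N: "\<And>t. t \<ge> N \<Longrightarrow> f t = g t"
    using assms unfolding germ_eq_def eventually_at_top_linorder by blast
  have "\<forall>\<^sub>F s in nhds t. f s = g s" if "t > N" for t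
    unfolding eventually_nhds using that N by (intro exI[of _ "{N<..}"]) auto
  then show ?thesis
    unfolding eventually_at_top_linorder by (intro exI[of _ "N + 1"]) auto
qed

lemma germ_eq_deriv: "germ_eq f g \<Longrightarrow> germ_eq (deriv f) (deriv g)"
  using germ_eq_eventually_nhds unfolding germ_eq_def
  by (rule eventually_mono) (auto intro: deriv_cong_ev)

lemma germ_eq_has_real_derivative:
  assumes "germ_eq f g" "\<forall>\<^sub>F t in at_top. (g has_real_derivative deriv g t) (at t)"
  shows "\<forall>\<^sub>F t in at_top. (f has_real_derivative deriv f t) (at t)"
  using germ_eq_eventually_nhds[OF assms(1)] assms(2)
proof eventually_elim
  case (elim t)
  then show ?case
    using deriv_cong_ev[OF elim(1) refl] DERIV_cong_ev[OF refl elim(1) refl] by simp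
qed

lemma germ_eq_cderiv: "germ_eq F G \<Longrightarrow> germ_eq (cderiv F) (cderiv G)"
proof -
  assume FG: "germ_eq F G"
  have "germ_eq (deriv (\<lambda>s. Re (F s))) (deriv (\<lambda>s. Re (G s)))"
       "germ_eq (deriv (\<lambda>s. Im (F s))) (deriv (\<lambda>s. Im (G s)))"
    using FG unfolding germ_eq_def by (auto intro!: germ_eq_deriv[unfolded germ_eq_def] elim: eventually_mono)
  then show ?thesis
    unfolding germ_eq_def cderiv_def by eventually_elim simp
qed

lemma prec_1_iff_tendsto_0: "prec f (\<lambda>_. 1) \<longleftrightarrow> (f \<longlongrightarrow> 0) at_top"
  by (simp add: prec_def)


lemma eventually_pos_or_neg_if_continuous_nonzero:
  fixes f :: "real \<Rightarrow> real"
  assumes "\<forall>\<^sub>F t in at_top. isCont f t" "\<forall>\<^sub>F t in at_top. f t \<noteq> 0"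
  shows "(\<forall>\<^sub>F t in at_top. f t > 0) \<or> (\<forall>\<^sub>F t in at_top. f t < 0)"
proof -
  obtain b where b: "\<And>t. t \<ge> b \<Longrightarrow> isCont f t \<and> f t \<noteq> 0"
    using eventually_conj[OF assms] unfolding eventually_at_top_linorder by blast
  have cont: "continuous_on {b..t} f" for t
    using b by (intro continuous_at_imp_continuous_on) auto
  have no_zero: "\<nexists>x. b \<le> x \<and> x \<le> t \<and> f x = 0" for t
    using b by auto
  show ?thesis
  proof (cases "f b > 0")
    case True
    have "f t > 0" if "t \<ge> b" for t
      using IVT2'[of f t 0 b, OF _ _ that cont] True no_zero[of t] by force
    then show ?thesis unfolding eventually_at_top_linorder by blast
  next
    case False
    then have "f b < 0" using b[of b] by auto
    have "f t < 0" if "t \<ge> b" for t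
      using IVT'[of f b 0 t, OF _ _ that cont] \<open>f b < 0\<close> no_zero[of t] by force
    then show ?thesis unfolding eventually_at_top_linorder by blast
  qed
qed

lemma mono_bounded_imp_convergent_at_top:
  fixes g :: "real \<Rightarrow> real"
  assumes mono: "\<And>x y. a \<le> x \<Longrightarrow> x \<le> y \<Longrightarrow> g x \<le> g y"
    and bound: "\<And>t. t \<ge> a \<Longrightarrow> g t \<le> B"
  shows "\<exists>L. (g \<longlongrightarrow> L) at_top"
proof -
  define L where "L = (SUP t\<in>{a..}. g t)"
  have bdd: "bdd_above (g ` {a..})"
    using bound by (intro bdd_aboveI2[where M = B]) auto
  have "(g \<longlongrightarrow> L) at_top"
  proof (rule increasing_tendsto)
    show "\<forall>\<^sub>F t in at_top. g t \<le> L"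
      unfolding eventually_at_top_linorder L_def using bdd
      by (intro exI[of _ a]) (auto intro: cSUP_upper)
  next
    fix x assume "x < L"
    then obtain t where "t \<ge> a" "x < g t"
      unfolding L_def using less_cSUP_iff[OF _ bdd] by auto
    then show "\<forall>\<^sub>F s in at_top. x < g s"
      unfolding eventually_at_top_linorder using mono[of t] by (intro exI[of _ t]) force
  qed
  then show ?thesis by blast
qed

text \<open>The increasing function \<open>z\<close> stays below \<open>w - (w a - z a)\<close> since \<open>w - z\<close> increases too.\<close>

lemma convergent_if_deriv_dominated:
  fixes z w :: "real \<Rightarrow> real"
  assumes "\<forall>\<^sub>F t in at_top. (z has_real_derivative z' t) (at t) \<and> (w has_real_derivative w' t) (at t)
             \<and> 0 \<le> z' t \<and> z' t \<le> w' t \<and> w t \<le> B"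
  shows "\<exists>L. (z \<longlongrightarrow> L) at_top"
proof -
  obtain a where a: "\<And>t. t \<ge> a \<Longrightarrow> (z has_real_derivative z' t) (at t) \<and> (w has_real_derivative w' t) (at t)
             \<and> 0 \<le> z' t \<and> z' t \<le> w' t \<and> w t \<le> B"
    using assms unfolding eventually_at_top_linorder by blast
  have z_mono: "z x \<le> z y" if "a \<le> x" "x \<le> y" for x y
  proof (rule DERIV_nonneg_imp_nondecreasing[OF that(2)])
    fix u assume "x \<le> u" "u \<le> y"
    then show "\<exists>d. (z has_real_derivative d) (at u) \<and> 0 \<le> d"
      using that a[of u] by auto
  qed
  have "(w x - z x) \<le> (w y - z y)" if "a \<le> x" "x \<le> y" for x y
  proof (rule DERIV_nonneg_imp_nondecreasing[OF that(2)])
    fix u assume "x \<le> u" "u \<le> y"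
    then have "(w has_real_derivative w' u) (at u)" "(z has_real_derivative z' u) (at u)" "z' u \<le> w' u"
      using that a[of u] by auto
    then show "\<exists>d. ((\<lambda>t. w t - z t) has_real_derivative d) (at u) \<and> 0 \<le> d"
      by (intro exI[of _ "w' u - z' u"]) (auto intro: DERIV_diff)
  qed
  then have "z t \<le> B - (w a - z a)" if "t \<ge> a" for t
    using that a[of t] by force
  then show ?thesis
    using mono_bounded_imp_convergent_at_top[of a z] z_mono by blast
qed

lemma has_vector_derivative_exp:
  fixes Z :: "real \<Rightarrow> complex"
  assumes "(Z has_vector_derivative D) (at t)"
  shows "((\<lambda>s. exp (Z s)) has_vector_derivative exp (Z t) * D) (at t)"
  using field_vector_diff_chain_at[OF assms DERIV_exp[of "Z t"]] by (simp add: o_def mult.commute)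

lemma exp_eq_const_mult_if_logderiv_eq:
  fixes F Y :: "real \<Rightarrow> complex"
  assumes "\<forall>\<^sub>F t in at_top. (F has_vector_derivative F' t) (at t) \<and> (Y has_vector_derivative Y' t) (at t)
             \<and> Y t \<noteq> 0 \<and> F' t = Y' t / Y t"
  shows "\<exists>c. \<forall>\<^sub>F t in at_top. exp (F t) = c * Y t"
proof -
  obtain N where N: "\<And>t. t \<ge> N \<Longrightarrow> (F has_vector_derivative F' t) (at t) \<and> (Y has_vector_derivative Y' t) (at t)
             \<and> Y t \<noteq> 0 \<and> F' t = Y' t / Y t"
    using assms unfolding eventually_at_top_linorder by blast
  define u where "u s = Y s * exp (- F s)" for s
  have "(u has_vector_derivative 0) (at t within {N<..})" if "t \<in> {N<..}" for t
  proof -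
    have t: "(F has_vector_derivative F' t) (at t)" "(Y has_vector_derivative Y' t) (at t)"
      "Y t \<noteq> 0" "F' t = Y' t / Y t"
      using N[of t] that by auto
    have "(u has_vector_derivative (Y t * (exp (- F t) * (- F' t)) + Y' t * exp (- F t))) (at t)"
      unfolding u_def
      by (intro has_vector_derivative_mult has_vector_derivative_exp has_vector_derivative_minus t)
    moreover have "Y t * (exp (- F t) * (- F' t)) + Y' t * exp (- F t) = 0"
      using t by (simp add: field_simps)
    ultimately show ?thesis by (auto intro: has_vector_derivative_at_within)
  qed
  then obtain c where c: "\<And>t. t \<in> {N<..} \<Longrightarrow> u t = c"
    using has_vector_derivative_zero_constant[of "{N<..}" u] by auto
  have "exp (F t) = inverse c * Y t" if "t > N" for t
  proof -
    have "Y t * exp (- F t) = c" "Y t \<noteq> 0"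
      using c[of t] N[of t] that unfolding u_def by auto
    then show ?thesis by (auto simp: exp_minus field_simps)
  qed
  then have "\<forall>\<^sub>F t in at_top. exp (F t) = inverse c * Y t"
    unfolding eventually_at_top_linorder by (intro exI[of _ "N + 1"]) auto
  then show ?thesis by blast
qed


lemma Re_mult_cderiv:
  "Re (a * cderiv f t) = Re a * deriv (\<lambda>s. Re (f s)) t + (- Im a) * deriv (\<lambda>s. Im (f s)) t"
  by (simp add: cderiv_def)

lemma Im_mult_cderiv:
  "Im (a * cderiv f t) = Re a * deriv (\<lambda>s. Im (f s)) t + Im a * deriv (\<lambda>s. Re (f s)) t"
  by (simp add: cderiv_def)

lemma has_vector_derivative_complex_of_parts:
  assumes "((\<lambda>s. Re (Z s)) has_real_derivative a) (at t)" "((\<lambda>s. Im (Z s)) has_real_derivative b) (at t)"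
  shows "(Z has_vector_derivative (of_real a + \<i> * of_real b)) (at t)"
proof -
  have "((\<lambda>s. complex_of_real (Re (Z s)) + \<i> * complex_of_real (Im (Z s)))
          has_vector_derivative (of_real a + \<i> * of_real b)) (at t)"
    using has_vector_derivative_of_real[OF assms(1)]
      bounded_linear.has_vector_derivative[OF bounded_linear_mult_right[of \<i>]
        has_vector_derivative_of_real[OF assms(2)]]
    by (rule has_vector_derivative_add)
  moreover have "(\<lambda>s. complex_of_real (Re (Z s)) + \<i> * complex_of_real (Im (Z s))) = Z"
    by (rule ext) (simp add: complex_eq_iff)
  ultimately show ?thesis by simp
qed

lemma cderiv_eqI:
  assumes "(W has_vector_derivative D) (at t)"
  shows "cderiv W t = D"
proof -
  have "((\<lambda>s. Re (W s)) has_real_derivative Re D) (at t)" "((\<lambda>s. Im (W s)) has_real_derivative Im D) (at t)"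
    using bounded_linear.has_vector_derivative[OF bounded_linear_Re assms]
      bounded_linear.has_vector_derivative[OF bounded_linear_Im assms]
    by (simp_all add: has_real_derivative_iff_has_vector_derivative)
  then show ?thesis
    unfolding cderiv_def by (simp add: DERIV_imp_deriv complex_eq_iff)
qed

lemma cderiv_in_Ideriv:
  assumes "in_germs K (\<lambda>_. 1)" "f \<in> valring K"
  shows "cderiv f \<in> Ideriv K"
proof -
  have "(\<lambda>_. 1) \<in> valring K"
    using assms(1) unfolding valring_def preceq_def by (auto intro: exI[of _ 1])
  then show ?thesis
    unfolding Ideriv_def using assms(2)
    by (intro CollectI exI[of _ 1] exI[of _ "\<lambda>_ _. 1"] exI[of _ "\<lambda>_. f"]) simp
qed

locale real_hardy_field =
  fixes H :: "(real \<Rightarrow> real) set"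
  assumes hardy: "hardy_field H" and reals: "contains_reals H"
begin

abbreviation inH :: "(real \<Rightarrow> real) \<Rightarrow> bool" where
  "inH \<equiv> in_germs H"

lemma inH_const: "inH (\<lambda>_. c)"
  using reals unfolding contains_reals_def by blast

lemma inH_add: "inH f \<Longrightarrow> inH g \<Longrightarrow> inH (\<lambda>t. f t + g t)"
  using hardy unfolding hardy_field_def
  by (metis in_germsE in_germs_cong germ_eq_comp2[of f _ g _ "(+)"])

lemma inH_mult: "inH f \<Longrightarrow> inH g \<Longrightarrow> inH (\<lambda>t. f t * g t)"
  using hardy unfolding hardy_field_def
  by (metis in_germsE in_germs_cong germ_eq_comp2[of f _ g _ "(*)"])

lemma inH_uminus: "inH f \<Longrightarrow> inH (\<lambda>t. - f t)"
  using hardy unfolding hardy_field_def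
  by (metis in_germsE in_germs_cong germ_eq_comp2[of f _ f _ "\<lambda>x _. - x"])

lemma inH_diff: "inH f \<Longrightarrow> inH g \<Longrightarrow> inH (\<lambda>t. f t - g t)"
  using inH_add[OF _ inH_uminus] by simp

lemma inH_deriv: "inH f \<Longrightarrow> inH (deriv f)"
  using hardy unfolding hardy_field_def by (metis in_germsE in_germs_cong germ_eq_deriv)

lemma inH_eventually_deriv:
  assumes "inH f"
  shows "\<forall>\<^sub>F t in at_top. (f has_real_derivative deriv f t) (at t)"
proof -
  obtain f0 where f0: "f0 \<in> H" "germ_eq f f0"
    using assms by (rule in_germsE)
  then obtain a where "Cn_on 1 {a<..} f0"
    using hardy unfolding hardy_field_def C_inf_def by blast
  then have "\<forall>\<^sub>F t in at_top. (f0 has_real_derivative deriv f0 t) (at t)"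
    unfolding Cn_on_def eventually_at_top_linorder
    by (auto intro!: exI[of _ "a + 1"] simp: DERIV_deriv_iff_real_differentiable)
  then show ?thesis
    using f0(2) by (rule germ_eq_has_real_derivative[rotated])
qed

lemma inH_eventually_nonzero:
  assumes "inH f" "\<not> germ_eq f (\<lambda>_. 0)"
  shows "\<forall>\<^sub>F t in at_top. f t \<noteq> 0"
proof -
  obtain f0 where f0: "f0 \<in> H" "germ_eq f f0"
    using assms(1) by (rule in_germsE)
  have "\<not> germ_eq f0 (\<lambda>_. 0)"
    using assms(2) f0(2) germ_eq_trans by blast
  then obtain g where "germ_eq (\<lambda>t. f0 t * g t) (\<lambda>_. 1)"
    using hardy f0(1) unfolding hardy_field_def by blast
  then show ?thesis
    using f0(2) unfolding germ_eq_def by (auto elim: eventually_elim2)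
qed

lemma inH_eventually_sign:
  assumes "inH f"
  obtains s :: real where "s = 1 \<or> s = -1" "\<forall>\<^sub>F t in at_top. s * f t \<ge> 0"
proof (cases "germ_eq f (\<lambda>_. 0)")
  case True
  then have "\<forall>\<^sub>F t in at_top. 1 * f t \<ge> 0"
    unfolding germ_eq_def by (auto elim: eventually_mono)
  then show ?thesis
    using that by blast
next
  case False
  have "\<forall>\<^sub>F t in at_top. isCont f t"
    using inH_eventually_deriv[OF assms] by (auto elim: eventually_mono intro: DERIV_isCont)
  then have "(\<forall>\<^sub>F t in at_top. f t > 0) \<or> (\<forall>\<^sub>F t in at_top. f t < 0)"
    using inH_eventually_nonzero[OF assms False] by (rule eventually_pos_or_neg_if_continuous_nonzero)
  then show ?thesis
  proof
    assume "\<forall>\<^sub>F t in at_top. f t > 0"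
    then have "\<forall>\<^sub>F t in at_top. 1 * f t \<ge> 0" by (auto elim: eventually_mono)
    then show ?thesis using that by blast
  next
    assume "\<forall>\<^sub>F t in at_top. f t < 0"
    then have "\<forall>\<^sub>F t in at_top. -1 * f t \<ge> 0" by (auto elim: eventually_mono)
    then show ?thesis using that by blast
  qed
qed


abbreviation K :: "(real \<Rightarrow> complex) set" where
  "K \<equiv> cplx_ext H"

lemma inK_iff: "in_germs K F \<longleftrightarrow> inH (\<lambda>t. Re (F t)) \<and> inH (\<lambda>t. Im (F t))"
proof
  assume "in_germs K F"
  then obtain g h where gh: "g \<in> H" "h \<in> H"
    "germ_eq F (\<lambda>t. complex_of_real (g t) + \<i> * complex_of_real (h t))"
    unfolding in_germs_def cplx_ext_def by blast
  then have "germ_eq (\<lambda>t. Re (F t)) g" "germ_eq (\<lambda>t. Im (F t)) h"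
    unfolding germ_eq_def by (auto elim: eventually_mono)
  with gh show "inH (\<lambda>t. Re (F t)) \<and> inH (\<lambda>t. Im (F t))"
    using in_germsI in_germs_cong by blast
next
  assume "inH (\<lambda>t. Re (F t)) \<and> inH (\<lambda>t. Im (F t))"
  then obtain g h where gh: "g \<in> H" "h \<in> H" "germ_eq (\<lambda>t. Re (F t)) g" "germ_eq (\<lambda>t. Im (F t)) h"
    by (meson in_germsE)
  have "germ_eq F (\<lambda>t. complex_of_real (g t) + \<i> * complex_of_real (h t))"
    using gh(3,4) unfolding germ_eq_def by eventually_elim (simp add: complex_eq_iff)
  moreover have "(\<lambda>t. complex_of_real (g t) + \<i> * complex_of_real (h t)) \<in> K"
    unfolding cplx_ext_def using gh by blast
  ultimately show "in_germs K F"
    unfolding in_germs_def by blast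
qed

lemma inK_eventually_vector_derivative:
  assumes "in_germs K F"
  shows "\<forall>\<^sub>F t in at_top. (F has_vector_derivative cderiv F t) (at t)"
  using inH_eventually_deriv[of "\<lambda>t. Re (F t)"] inH_eventually_deriv[of "\<lambda>t. Im (F t)"] assms
  unfolding inK_iff cderiv_def
  by (auto elim: eventually_elim2 intro: has_vector_derivative_complex_of_parts)

lemma inK_eventually_nonzero:
  assumes "in_germs K F" "\<not> germ_eq F (\<lambda>_. 0)"
  shows "\<forall>\<^sub>F t in at_top. F t \<noteq> 0"
proof -
  have "\<not> germ_eq (\<lambda>t. Re (F t)) (\<lambda>_. 0) \<or> \<not> germ_eq (\<lambda>t. Im (F t)) (\<lambda>_. 0)"
  proof (rule ccontr)
    assume "\<not> ?thesis"
    then have "\<forall>\<^sub>F t in at_top. Re (F t) = 0" "\<forall>\<^sub>F t in at_top. Im (F t) = 0"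
      unfolding germ_eq_def by auto
    then have "germ_eq F (\<lambda>_. 0)"
      unfolding germ_eq_def by eventually_elim (simp add: complex_eq_iff)
    with assms(2) show False ..
  qed
  then show ?thesis
  proof
    assume "\<not> germ_eq (\<lambda>t. Re (F t)) (\<lambda>_. 0)"
    then have "\<forall>\<^sub>F t in at_top. Re (F t) \<noteq> 0"
      using assms(1) inH_eventually_nonzero unfolding inK_iff by blast
    then show ?thesis by (rule eventually_mono) auto
  next
    assume "\<not> germ_eq (\<lambda>t. Im (F t)) (\<lambda>_. 0)"
    then have "\<forall>\<^sub>F t in at_top. Im (F t) \<noteq> 0"
      using assms(1) inH_eventually_nonzero unfolding inK_iff by blast
    then show ?thesis by (rule eventually_mono) auto
  qed
qed

lemma inK_mult_const: "in_germs K F \<Longrightarrow> in_germs K (\<lambda>t. c * F t)"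
  unfolding inK_iff by (simp add: inH_add inH_diff inH_mult inH_const)

lemma valring_parts:
  assumes "F \<in> valring K"
  shows "inH (\<lambda>t. Re (F t))" "inH (\<lambda>t. Im (F t))"
    "\<exists>C. \<forall>\<^sub>F t in at_top. \<bar>Re (F t)\<bar> \<le> C" "\<exists>C. \<forall>\<^sub>F t in at_top. \<bar>Im (F t)\<bar> \<le> C"
proof -
  show "inH (\<lambda>t. Re (F t))" "inH (\<lambda>t. Im (F t))"
    using assms inK_iff unfolding valring_def by auto
  obtain C where C: "\<forall>\<^sub>F t in at_top. cmod (F t) \<le> C"
    using assms unfolding valring_def preceq_def by auto
  show "\<exists>C. \<forall>\<^sub>F t in at_top. \<bar>Re (F t)\<bar> \<le> C"
    using C abs_Re_le_cmod by (intro exI[of _ C]) (auto elim!: eventually_mono intro: order_trans)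
  show "\<exists>C. \<forall>\<^sub>F t in at_top. \<bar>Im (F t)\<bar> \<le> C"
    using C abs_Im_le_cmod by (intro exI[of _ C]) (auto elim!: eventually_mono intro: order_trans)
qed


lemma exp_closed_on_germs:
  assumes exp_closed: "\<forall>f\<in>K. prec f (\<lambda>_. 1) \<longrightarrow> in_germs K (\<lambda>t. exp (f t))"
    and F: "in_germs K F" "prec F (\<lambda>_. 1)"
  shows "in_germs K (\<lambda>t. exp (F t))"
proof -
  obtain G where G: "G \<in> K" "germ_eq F G"
    using F(1) by (rule in_germsE)
  have "(G \<longlongrightarrow> 0) at_top"
    using F(2) G(2) unfolding prec_1_iff_tendsto_0 germ_eq_def by (rule Lim_transform_eventually)
  then have "in_germs K (\<lambda>t. exp (G t))"
    using exp_closed G(1) by (simp add: prec_1_iff_tendsto_0)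
  moreover have "germ_eq (\<lambda>t. exp (F t)) (\<lambda>t. exp (G t))"
    using G(2) unfolding germ_eq_def by (auto elim: eventually_mono)
  ultimately show ?thesis
    by (rule in_germs_cong)
qed

lemma exp_closed_imp_exp_cos_sin_closed:
  assumes exp_closed: "\<forall>f\<in>K. prec f (\<lambda>_. 1) \<longrightarrow> in_germs K (\<lambda>t. exp (f t))"
    and \<phi>: "\<phi> \<in> H" "prec \<phi> (\<lambda>_. 1)"
  shows "inH (\<lambda>t. exp (\<phi> t)) \<and> inH (\<lambda>t. cos (\<phi> t)) \<and> inH (\<lambda>t. sin (\<phi> t))"
proof -
  have "(\<phi> \<longlongrightarrow> 0) at_top"
    using \<phi>(2) by (simp add: prec_1_iff_tendsto_0)
  then have "prec (\<lambda>t. complex_of_real (\<phi> t)) (\<lambda>_. 1)" "prec (\<lambda>t. \<i> * complex_of_real (\<phi> t)) (\<lambda>_. 1)"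
    unfolding prec_1_iff_tendsto_0 by (auto intro: tendsto_eq_intros)
  moreover have "in_germs K (\<lambda>t. complex_of_real (\<phi> t))" "in_germs K (\<lambda>t. \<i> * complex_of_real (\<phi> t))"
    unfolding inK_iff using in_germsI[OF \<phi>(1)] inH_const[of 0] by simp_all
  ultimately have "in_germs K (\<lambda>t. exp (complex_of_real (\<phi> t)))"
    "in_germs K (\<lambda>t. exp (\<i> * complex_of_real (\<phi> t)))"
    using exp_closed_on_germs[OF exp_closed] by blast+
  then show ?thesis
    unfolding inK_iff by (simp add: Re_exp Im_exp flip: exp_of_real)
qed

lemma exp_cos_sin_closed_imp_exp_closed:
  assumes exp_cos_sin_closed: "\<forall>\<phi>\<in>H. prec \<phi> (\<lambda>_. 1) \<longrightarrow>
      inH (\<lambda>t. exp (\<phi> t)) \<and> inH (\<lambda>t. cos (\<phi> t)) \<and> inH (\<lambda>t. sin (\<phi> t))"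
    and F: "F \<in> K" "prec F (\<lambda>_. 1)"
  shows "in_germs K (\<lambda>t. exp (F t))"
proof -
  obtain g h where gh: "g \<in> H" "h \<in> H" "F = (\<lambda>t. complex_of_real (g t) + \<i> * complex_of_real (h t))"
    using F(1) unfolding cplx_ext_def by blast
  have "(F \<longlongrightarrow> 0) at_top"
    using F(2) by (simp add: prec_1_iff_tendsto_0)
  then have "((\<lambda>t. Re (F t)) \<longlongrightarrow> 0) at_top" "((\<lambda>t. Im (F t)) \<longlongrightarrow> 0) at_top"
    using tendsto_Re tendsto_Im by fastforce+
  then have "prec g (\<lambda>_. 1)" "prec h (\<lambda>_. 1)"
    using gh(3) by (simp_all add: prec_1_iff_tendsto_0)
  then have "inH (\<lambda>t. exp (g t))" "inH (\<lambda>t. cos (h t))" "inH (\<lambda>t. sin (h t))"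
    using exp_cos_sin_closed gh by blast+
  then show ?thesis
    unfolding inK_iff using gh(3) by (simp add: Re_exp Im_exp inH_mult)
qed

lemma Ideriv_subset_logder_imp_exp_closed:
  assumes Ideriv_logder: "Ideriv K \<subseteq> logder K"
    and F: "F \<in> K" "prec F (\<lambda>_. 1)"
  shows "in_germs K (\<lambda>t. exp (F t))"
proof -
  have "(F \<longlongrightarrow> 0) at_top"
    using F(2) by (simp add: prec_1_iff_tendsto_0)
  then have "\<forall>\<^sub>F t in at_top. cmod (F t) \<le> 1"
    using order_tendstoD(2)[OF tendsto_norm, of F 0 at_top 1] by (auto elim: eventually_mono)
  then have "F \<in> valring K"
    unfolding valring_def preceq_def using in_germsI[OF F(1)] by (auto intro!: exI[of _ 1])
  moreover have "in_germs K (\<lambda>_. 1)"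
    unfolding inK_iff by (simp add: inH_const)
  ultimately have "cderiv F \<in> logder K"
    using cderiv_in_Ideriv Ideriv_logder by blast
  then obtain Y where Y: "Y \<in> K" "\<not> germ_eq Y (\<lambda>_. 0)" "germ_eq (cderiv F) (\<lambda>t. cderiv Y t / Y t)"
    unfolding logder_def by blast
  have "\<forall>\<^sub>F t in at_top. (F has_vector_derivative cderiv F t) (at t)
          \<and> (Y has_vector_derivative cderiv Y t) (at t) \<and> Y t \<noteq> 0 \<and> cderiv F t = cderiv Y t / Y t"
    using inK_eventually_vector_derivative[OF in_germsI[OF F(1)]]
      inK_eventually_vector_derivative[OF in_germsI[OF Y(1)]]
      inK_eventually_nonzero[OF in_germsI[OF Y(1)] Y(2)] Y(3)[unfolded germ_eq_def]
    by eventually_elim blast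
  then obtain c where "\<forall>\<^sub>F t in at_top. exp (F t) = c * Y t"
    using exp_eq_const_mult_if_logderiv_eq by blast
  then have "germ_eq (\<lambda>t. exp (F t)) (\<lambda>t. c * Y t)"
    unfolding germ_eq_def .
  then show ?thesis
    by (rule in_germs_cong[OF inK_mult_const[OF in_germsI[OF Y(1)]]])
qed


end

locale integration_closed_hardy_field = real_hardy_field +
  assumes antiderivatives: "\<forall>f\<in>H. \<exists>g\<in>H. germ_eq (deriv g) f"
begin

definition has_convergent_antiderivative :: "(real \<Rightarrow> real) \<Rightarrow> bool" where
  "has_convergent_antiderivative w \<longleftrightarrow> (\<exists>z L. inH z \<and> germ_eq (deriv z) w \<and> (z \<longlongrightarrow> L) at_top)"

lemma inH_antiderivative:
  assumes "inH w"
  obtains z where "z \<in> H" "germ_eq (deriv z) w"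
proof -
  obtain w0 where "w0 \<in> H" "germ_eq w w0"
    using assms by (rule in_germsE)
  with antiderivatives that show ?thesis
    using germ_eq_trans germ_eq_sym by blast
qed

lemma bounded_mult_deriv_has_convergent_antiderivative:
  assumes "inH \<alpha>" "inH \<beta>" "\<forall>\<^sub>F t in at_top. \<bar>\<alpha> t\<bar> \<le> C" "\<forall>\<^sub>F t in at_top. \<bar>\<beta> t\<bar> \<le> M"
  shows "has_convergent_antiderivative (\<lambda>t. \<alpha> t * deriv \<beta> t)"
proof -
  obtain z where z: "z \<in> H" "germ_eq (deriv z) (\<lambda>t. \<alpha> t * deriv \<beta> t)"
    using inH_antiderivative inH_mult[OF assms(1) inH_deriv[OF assms(2)]] by blast
  note zH = in_germsI[OF z(1)]
  obtain \<sigma> :: real where \<sigma>: "\<sigma> = 1 \<or> \<sigma> = -1" "\<forall>\<^sub>F t in at_top. \<sigma> * deriv z t \<ge> 0"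
    using inH_eventually_sign[OF inH_deriv[OF zH]] by blast
  obtain s :: real where s: "s = 1 \<or> s = -1" "\<forall>\<^sub>F t in at_top. s * deriv \<beta> t \<ge> 0"
    using inH_eventually_sign[OF inH_deriv[OF assms(2)]] by blast
  have "\<forall>\<^sub>F t in at_top.
      ((\<lambda>t. \<sigma> * z t) has_real_derivative \<sigma> * deriv z t) (at t)
      \<and> ((\<lambda>t. C * s * \<beta> t) has_real_derivative C * s * deriv \<beta> t) (at t)
      \<and> 0 \<le> \<sigma> * deriv z t \<and> \<sigma> * deriv z t \<le> C * s * deriv \<beta> t \<and> C * s * \<beta> t \<le> C * M"
    using inH_eventually_deriv[OF zH] inH_eventually_deriv[OF assms(2)] assms(3,4) \<sigma>(2) s(2)
      z(2)[unfolded germ_eq_def]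
  proof eventually_elim
    case (elim t)
    have "C \<ge> 0" using elim(3) by linarith
    have "\<sigma> * deriv z t = \<bar>deriv z t\<bar>"
      using elim(5) \<sigma>(1) by auto
    also have "\<dots> = \<bar>\<alpha> t\<bar> * \<bar>deriv \<beta> t\<bar>"
      using elim(7) by (simp add: abs_mult)
    also have "\<dots> = \<bar>\<alpha> t\<bar> * (s * deriv \<beta> t)"
      using elim(6) s(1) by auto
    also have "\<dots> \<le> C * (s * deriv \<beta> t)"
      using elim(3,6) by (intro mult_right_mono) auto
    finally have "\<sigma> * deriv z t \<le> C * s * deriv \<beta> t" by simp
    moreover have "C * (s * \<beta> t) \<le> C * M"
      using elim(4) s(1) \<open>C \<ge> 0\<close> by (auto intro: mult_left_mono)
    ultimately show ?case
      using elim(1,2,5) by (auto intro!: derivative_eq_intros)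
  qed
  then obtain L where "((\<lambda>t. \<sigma> * z t) \<longlongrightarrow> L) at_top"
    using convergent_if_deriv_dominated[where z' = "\<lambda>t. \<sigma> * deriv z t" and w = "\<lambda>t. C * s * \<beta> t"
        and w' = "\<lambda>t. C * s * deriv \<beta> t"] by blast
  then have "((\<lambda>t. \<sigma> * (\<sigma> * z t)) \<longlongrightarrow> \<sigma> * L) at_top"
    by (rule tendsto_mult_left)
  then have "(z \<longlongrightarrow> \<sigma> * L) at_top"
    using \<sigma>(1) by auto
  then show ?thesis
    unfolding has_convergent_antiderivative_def using zH z(2) by blast
qed

lemma has_convergent_antiderivative_cong:
  "has_convergent_antiderivative w \<Longrightarrow> germ_eq v w \<Longrightarrow> has_convergent_antiderivative v"
  unfolding has_convergent_antiderivative_def by (meson germ_eq_sym germ_eq_trans)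

lemma has_convergent_antiderivative_add:
  assumes "has_convergent_antiderivative w1" "has_convergent_antiderivative w2"
  shows "has_convergent_antiderivative (\<lambda>t. w1 t + w2 t)"
proof -
  obtain z1 L1 where 1: "inH z1" "germ_eq (deriv z1) w1" "(z1 \<longlongrightarrow> L1) at_top"
    using assms(1) unfolding has_convergent_antiderivative_def by blast
  obtain z2 L2 where 2: "inH z2" "germ_eq (deriv z2) w2" "(z2 \<longlongrightarrow> L2) at_top"
    using assms(2) unfolding has_convergent_antiderivative_def by blast
  have "germ_eq (deriv (\<lambda>t. z1 t + z2 t)) (\<lambda>t. w1 t + w2 t)"
    using inH_eventually_deriv[OF 1(1)] inH_eventually_deriv[OF 2(1)] 1(2) 2(2)
    unfolding germ_eq_def by eventually_elim (auto intro!: DERIV_imp_deriv derivative_eq_intros)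
  moreover have "((\<lambda>t. z1 t + z2 t) \<longlongrightarrow> L1 + L2) at_top"
    using 1(3) 2(3) by (rule tendsto_add)
  ultimately show ?thesis
    unfolding has_convergent_antiderivative_def using inH_add[OF 1(1) 2(1)] by blast
qed

lemma has_convergent_antiderivative_sum:
  "(\<And>j. j < (n::nat) \<Longrightarrow> has_convergent_antiderivative (T j))
    \<Longrightarrow> has_convergent_antiderivative (\<lambda>t. \<Sum>j<n. T j t)"
proof (induction n)
  case 0
  show ?case
    unfolding has_convergent_antiderivative_def using inH_const[of 0] by (auto intro!: exI[of _ 0])
next
  case (Suc n)
  then show ?case
    using has_convergent_antiderivative_add[of "\<lambda>t. \<Sum>j<n. T j t" "T n"] by simp
qed

lemma has_convergent_antiderivative_mult_cderiv:
  assumes "A \<in> valring K" "B \<in> valring K"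
  shows "has_convergent_antiderivative (\<lambda>t. Re (A t * cderiv B t))"
    "has_convergent_antiderivative (\<lambda>t. Im (A t * cderiv B t))"
proof -
  note A = valring_parts[OF assms(1)] and B = valring_parts[OF assms(2)]
  have minus_Im_A: "inH (\<lambda>t. - Im (A t))" "\<exists>C. \<forall>\<^sub>F t in at_top. \<bar>- Im (A t)\<bar> \<le> C"
    using inH_uminus[OF A(2)] A(4) by simp_all
  show "has_convergent_antiderivative (\<lambda>t. Re (A t * cderiv B t))"
    unfolding Re_mult_cderiv using A B minus_Im_A
    by (metis has_convergent_antiderivative_add bounded_mult_deriv_has_convergent_antiderivative)
  show "has_convergent_antiderivative (\<lambda>t. Im (A t * cderiv B t))"
    unfolding Im_mult_cderiv using A B
    by (metis has_convergent_antiderivative_add bounded_mult_deriv_has_convergent_antiderivative)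
qed

lemma Ideriv_has_convergent_antiderivatives:
  assumes "g \<in> Ideriv K"
  shows "has_convergent_antiderivative (\<lambda>t. Re (g t))" "has_convergent_antiderivative (\<lambda>t. Im (g t))"
proof -
  obtain n :: nat and a f where af: "\<forall>j<n. a j \<in> valring K \<and> f j \<in> valring K"
    and g: "germ_eq g (\<lambda>t. \<Sum>j<n. a j t * cderiv (f j) t)"
    using assms unfolding Ideriv_def by force
  have "germ_eq (\<lambda>t. Re (g t)) (\<lambda>t. \<Sum>j<n. Re (a j t * cderiv (f j) t))"
       "germ_eq (\<lambda>t. Im (g t)) (\<lambda>t. \<Sum>j<n. Im (a j t * cderiv (f j) t))"
    using g unfolding germ_eq_def by (auto elim!: eventually_mono simp: Re_sum Im_sum)
  then show "has_convergent_antiderivative (\<lambda>t. Re (g t))" "has_convergent_antiderivative (\<lambda>t. Im (g t))"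
    using af has_convergent_antiderivative_mult_cderiv
    by (auto intro!: has_convergent_antiderivative_sum elim!: has_convergent_antiderivative_cong[rotated])
qed

lemma convergent_antiderivative_tendsto_0:
  assumes "has_convergent_antiderivative w"
  obtains p where "p \<in> H" "(p \<longlongrightarrow> 0) at_top" "germ_eq (deriv p) w"
proof -
  obtain z L where z: "inH z" "germ_eq (deriv z) w" "(z \<longlongrightarrow> L) at_top"
    using assms unfolding has_convergent_antiderivative_def by blast
  obtain p where p: "p \<in> H" "germ_eq (\<lambda>t. z t - L) p"
    using inH_diff[OF z(1) inH_const] by (rule in_germsE)
  have "((\<lambda>t. z t - L) \<longlongrightarrow> 0) at_top"
    using tendsto_diff[OF z(3) tendsto_const[of L]] by simp
  then have "(p \<longlongrightarrow> 0) at_top"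
    using p(2) unfolding germ_eq_def by (rule Lim_transform_eventually)
  moreover have "germ_eq (deriv (\<lambda>t. z t - L)) (deriv z)"
    using inH_eventually_deriv[OF z(1)] unfolding germ_eq_def
    by eventually_elim (auto intro!: DERIV_imp_deriv derivative_eq_intros)
  then have "germ_eq (deriv p) w"
    using germ_eq_deriv[OF p(2)] z(2) germ_eq_sym germ_eq_trans by metis
  ultimately show ?thesis
    using that p(1) by blast
qed

lemma Ideriv_eq_cderiv_infinitesimal:
  assumes "g \<in> Ideriv K"
  obtains \<epsilon> where "\<epsilon> \<in> K" "prec \<epsilon> (\<lambda>_. 1)" "germ_eq g (cderiv \<epsilon>)"
proof -
  obtain p where p: "p \<in> H" "(p \<longlongrightarrow> 0) at_top" "germ_eq (deriv p) (\<lambda>t. Re (g t))"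
    using convergent_antiderivative_tendsto_0[OF Ideriv_has_convergent_antiderivatives(1)[OF assms]] .
  obtain q where q: "q \<in> H" "(q \<longlongrightarrow> 0) at_top" "germ_eq (deriv q) (\<lambda>t. Im (g t))"
    using convergent_antiderivative_tendsto_0[OF Ideriv_has_convergent_antiderivatives(2)[OF assms]] .
  define \<epsilon> where "\<epsilon> t = complex_of_real (p t) + \<i> * complex_of_real (q t)" for t
  have cderiv_\<epsilon>: "cderiv \<epsilon> = (\<lambda>t. complex_of_real (deriv p t) + \<i> * complex_of_real (deriv q t))"
    unfolding cderiv_def \<epsilon>_def by simp
  have "\<epsilon> \<in> K"
    unfolding \<epsilon>_def cplx_ext_def using p(1) q(1) by blast
  moreover have "prec \<epsilon> (\<lambda>_. 1)"
    unfolding prec_1_iff_tendsto_0 \<epsilon>_def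
    using tendsto_add[OF tendsto_of_real[OF p(2)] tendsto_mult[OF tendsto_const tendsto_of_real[OF q(2)]]]
    by simp
  moreover have "germ_eq g (cderiv \<epsilon>)"
    using p(3) q(3) unfolding cderiv_\<epsilon> germ_eq_def by eventually_elim (simp add: complex_eq_iff)
  ultimately show ?thesis
    using that by blast
qed

lemma exp_closed_imp_Ideriv_subset_logder:
  assumes exp_closed: "\<forall>f\<in>K. prec f (\<lambda>_. 1) \<longrightarrow> in_germs K (\<lambda>t. exp (f t))"
  shows "Ideriv K \<subseteq> logder K"
proof
  fix g assume "g \<in> Ideriv K"
  then obtain \<epsilon> where \<epsilon>: "\<epsilon> \<in> K" "prec \<epsilon> (\<lambda>_. 1)" "germ_eq g (cderiv \<epsilon>)"
    by (rule Ideriv_eq_cderiv_infinitesimal)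
  then obtain Y where Y: "Y \<in> K" "germ_eq (\<lambda>t. exp (\<epsilon> t)) Y"
    using exp_closed by (meson in_germsE)
  have "\<not> germ_eq Y (\<lambda>_. 0)"
  proof
    assume "germ_eq Y (\<lambda>_. 0)"
    with Y(2) have "germ_eq (\<lambda>t. exp (\<epsilon> t)) (\<lambda>_. 0)"
      by (rule germ_eq_trans)
    then show False
      unfolding germ_eq_def by simp
  qed
  moreover have "germ_eq g (\<lambda>t. cderiv Y t / Y t)"
    using \<epsilon>(3) germ_eq_cderiv[OF Y(2)] Y(2) inK_eventually_vector_derivative[OF in_germsI[OF \<epsilon>(1)]]
    unfolding germ_eq_def
  proof eventually_elim
    case (elim t)
    then have "cderiv (\<lambda>t. exp (\<epsilon> t)) t = exp (\<epsilon> t) * cderiv \<epsilon> t"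
      by (intro cderiv_eqI has_vector_derivative_exp)
    then have "cderiv Y t = Y t * cderiv \<epsilon> t"
      using elim by simp
    moreover have "Y t \<noteq> 0"
      using elim by (metis exp_not_eq_zero)
    ultimately show ?case
      using elim by simp
  qed
  ultimately show "g \<in> logder K"
    unfolding logder_def using Y(1) by blast
qed

end

theorem mainTheorem13:
  fixes H :: "(real \<Rightarrow> real) set"
  assumes "hardy_field H"
    and "contains_reals H"
    and "\<forall>f\<in>H. \<exists>g\<in>H. germ_eq (deriv g) f"
  defines "K \<equiv> cplx_ext H"
  shows "(Ideriv K \<subseteq> logder K
          \<longleftrightarrow> (\<forall>f\<in>K. prec f (\<lambda>_. 1) \<longrightarrow> in_germs K (\<lambda>t. exp (f t))))
       \<and> ((\<forall>f\<in>K. prec f (\<lambda>_. 1) \<longrightarrow> in_germs K (\<lambda>t. exp (f t)))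
          \<longleftrightarrow> (\<forall>\<phi>\<in>H. prec \<phi> (\<lambda>_. 1) \<longrightarrow>
                 in_germs H (\<lambda>t. exp (\<phi> t)) \<and> in_germs H (\<lambda>t. cos (\<phi> t)) \<and>
                 in_germs H (\<lambda>t. sin (\<phi> t))))"
proof -
  interpret integration_closed_hardy_field H
    using assms(1-3) by unfold_locales
  show ?thesis
    unfolding K_def
    using Ideriv_subset_logder_imp_exp_closed exp_closed_imp_Ideriv_subset_logder
      exp_closed_imp_exp_cos_sin_closed exp_cos_sin_closed_imp_exp_closed
    by blast
qed

end
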